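(* Let $M\ge1$. Then $\kappa(\mathsf{S}_M)=\mathfrak{L}_M$, and for every $k\in\mathfrak{L}_M$, $$\{\beta(\mathsf{p}):\mathsf{p}\in\mathsf{S}_M,\ \kappa(\mathsf{p})=k\}=\{b\in\mathbb{Z}^{M+1}:\min\{\mathbb{1},\tilde k\}\le b\le\min\{k,\tilde k\}\},$$ equivalently the Cartesian product $V_0\times\cdots\times V_M$ with $V_n=\{\min\{1,\tilde k_n\},\ldots,\min\{k_n,\tilde k_n\}\}$.
   Context: Scattering sequences: $\mathsf{S}_M$ is the set of integer sequences $\mathsf{p}=(i_0,\ldots,i_L)$ with $L\ge2$, $i_0=i_L=-1$, $i_j\in\{0,\ldots,M\}$ for $1\le j\le L-1$, and $|i_{j+1}-i_j|=1$ for $0\le j\le L-1$ ($i_j=m$ means the pulse is at depth $z_m$). Transit count vector $\kappa(\mathsf{p})=(k_0,\ldots,k_M)$: for $0\le n\le M$, $k_n$ is the number of maximal blocks of consecutive indices $j\in\{0,\ldots,L\}$ with $i_j\ge n$. Branch count vector $\beta(\mathsf{p})=(b_0,\ldots,b_M)$: $b_n$ is the number of those maximal blocks containing at least two indices. $\mathfrak{L}_M\subset\mathbb{Z}^{M+1}_{\geq0}$: all $k$ with $k_0=1$ and $k_n>0\Rightarrow k_{n-1}>0$ ($1\le n\le M$). $\tilde k=(k_1,\ldots,k_M,0)$; $\mathbb{1}=(1,\ldots,1)$; inequalities and $\min$ are entrywise. *)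

theory Defs
  imports Main
begin

text \<open>A scattering sequence p = (i_0,...,i_L) is represented as an int list of length L+1;
  vectors in Z^(M+1) are int lists of length M+1 (entry n = coordinate n).\<close>

definition scattering_seqs :: "nat \<Rightarrow> int list set" where
  "scattering_seqs M = {p. length p \<ge> 3 \<and> p ! 0 = -1 \<and> p ! (length p - 1) = -1
     \<and> (\<forall>j. 1 \<le> j \<and> j \<le> length p - 2 \<longrightarrow> 0 \<le> p ! j \<and> p ! j \<le> int M)
     \<and> (\<forall>j. j < length p - 1 \<longrightarrow> \<bar>p ! (Suc j) - p ! j\<bar> = 1)}"

definition blocks :: "int list \<Rightarrow> nat \<Rightarrow> (nat \<times> nat) set" where
  "blocks p n = {(a, b). a \<le> b \<and> b < length p
     \<and> (\<forall>j. a \<le> j \<and> j \<le> b \<longrightarrow> p ! j \<ge> int n)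
     \<and> (a = 0 \<or> p ! (a - 1) < int n)
     \<and> (b = length p - 1 \<or> p ! (Suc b) < int n)}"

definition kappa :: "nat \<Rightarrow> int list \<Rightarrow> int list" where
  "kappa M p = map (\<lambda>n. int (card (blocks p n))) [0..<Suc M]"

definition beta :: "nat \<Rightarrow> int list \<Rightarrow> int list" where
  "beta M p = map (\<lambda>n. int (card {(a, b) \<in> blocks p n. a < b})) [0..<Suc M]"

definition frakL :: "nat \<Rightarrow> int list set" where
  "frakL M = {k. length k = Suc M \<and> (\<forall>n \<le> M. k ! n \<ge> 0) \<and> k ! 0 = 1
     \<and> (\<forall>n. 1 \<le> n \<and> n \<le> M \<longrightarrow> k ! n > 0 \<longrightarrow> k ! (n - 1) > 0)}"

definition ktilde :: "int list \<Rightarrow> int list" where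
  "ktilde k = tl k @ [0]"

end

theory Submission
  imports Defs
begin

(* A scattering sequence p is a walk with unit steps starting and ending at -1.
   Since p starts below every level n >= 0, each maximal block of indices with
   p_j >= n begins with an up-crossing p_j = n-1, p_(j+1) = n, and the block has
   at least two indices iff that crossing continues with p_(j+2) = n+1 (a
   "branch crossing").  So kappa and beta count up-crossings and branch crossings.

   Necessity (kappa p in L_M, beta p in the box of kappa p): there is an
   up-crossing to 0; the first up-crossing to n is preceded by one to n-1 and
   is itself the tail of a branch crossing at n-1; every branch crossing at n
   yields an up-crossing to n+1; no branch crossing exists at the top level M.

   Sufficiency: walks are built from the top level downwards.  A family of
   excursions above level n+1 (walks from n+1 back to n+1 staying >= n+1) is
   split into k_n groups, exactly b_n of them nonempty; joining each group at
   level n gives k_n excursions above n with the prescribed counts.  At level 0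
   a single excursion r remains and p = (-1) r (-1) realises (k, b). *)

section \<open>Walks with unit steps and window counts\<close>

fun unit_steps :: "int list \<Rightarrow> bool" where
  "unit_steps (a # b # r) = (\<bar>b - a\<bar> = 1 \<and> unit_steps (b # r))"
| "unit_steps _ = True"

lemma unit_steps_Cons: "unit_steps (a # r) = (unit_steps r \<and> (r \<noteq> [] \<longrightarrow> \<bar>hd r - a\<bar> = 1))"
  by (cases r) auto

lemma unit_steps_append:
  "unit_steps (xs @ ys) =
     (unit_steps xs \<and> unit_steps ys \<and> (xs \<noteq> [] \<longrightarrow> ys \<noteq> [] \<longrightarrow> \<bar>hd ys - last xs\<bar> = 1))"
  by (induction xs) (auto simp: unit_steps_Cons)

lemma unit_steps_iff: "unit_steps xs = (\<forall>j. Suc j < length xs \<longrightarrow> \<bar>xs ! Suc j - xs ! j\<bar> = 1)"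
proof (induction xs)
  case (Cons a r)
  have "(\<forall>j. Suc j < length (a # r) \<longrightarrow> \<bar>(a # r) ! Suc j - (a # r) ! j\<bar> = 1) =
        ((r \<noteq> [] \<longrightarrow> \<bar>hd r - a\<bar> = 1) \<and> (\<forall>j. Suc j < length r \<longrightarrow> \<bar>r ! Suc j - r ! j\<bar> = 1))"
    (is "?L = ?R")
  proof
    assume L: ?L
    have "r \<noteq> [] \<longrightarrow> \<bar>hd r - a\<bar> = 1" using L[rule_format, of 0] by (cases r) auto
    moreover have "\<forall>j. Suc j < length r \<longrightarrow> \<bar>r ! Suc j - r ! j\<bar> = 1"
      using L by (metis Suc_less_eq length_Cons nth_Cons_Suc)
    ultimately show ?R by blast
  next
    assume R: ?R
    show ?L
    proof (intro allI impI)
      fix j assume "Suc j < length (a # r)"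
      then show "\<bar>(a # r) ! Suc j - (a # r) ! j\<bar> = 1"
        using R by (cases j) (auto simp: hd_conv_nth)
    qed
  qed
  then show ?case unfolding unit_steps_Cons Cons.IH by blast
qed simp

lemma first_up_crossing:
  fixes p :: "int list"
  assumes "unit_steps p" "i < length p" "p ! 0 < v" "v \<le> p ! i"
  shows "\<exists>j. Suc j \<le> i \<and> p ! j = v - 1 \<and> p ! Suc j = v \<and> (\<forall>t\<le>j. p ! t < v)"
proof -
  let ?P = "\<lambda>i. i < length p \<and> v \<le> p ! i"
  define i0 where "i0 = (LEAST i. ?P i)"
  have P0: "?P i0" unfolding i0_def by (rule LeastI[of ?P i]) (use assms in auto)
  have le: "i0 \<le> i" unfolding i0_def by (rule Least_le) (use assms in auto)
  have nz: "i0 \<noteq> 0" using P0 assms(3) by (cases i0) auto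
  have below: "\<forall>t<i0. p ! t < v"
  proof (intro allI impI)
    fix t assume "t < i0"
    then have "\<not> ?P t" unfolding i0_def by (rule not_less_Least)
    then show "p ! t < v" using \<open>t < i0\<close> P0 by simp
  qed
  have "\<bar>p ! Suc (i0 - 1) - p ! (i0 - 1)\<bar> = 1"
    using assms(1) unit_steps_iff P0 nz by (metis Suc_pred' not_gr_zero)
  moreover have "p ! (i0 - 1) < v" using below nz by simp
  ultimately have "p ! (i0 - 1) = v - 1 \<and> p ! i0 = v" using P0 nz by (simp add: abs_if split: if_splits)
  then show ?thesis using le nz below by (intro exI[of _ "i0 - 1"]) auto
qed

fun count2 :: "int \<Rightarrow> int \<Rightarrow> int list \<Rightarrow> nat" where
  "count2 x y (a # b # r) = (if a = x \<and> b = y then 1 else 0) + count2 x y (b # r)"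
| "count2 x y _ = 0"

fun count3 :: "int \<Rightarrow> int \<Rightarrow> int \<Rightarrow> int list \<Rightarrow> nat" where
  "count3 x y z (a # b # c # r) =
     (if a = x \<and> b = y \<and> c = z then 1 else 0) + count3 x y z (b # c # r)"
| "count3 x y z _ = 0"

lemma count2_Cons:
  "count2 x y (a # r) = (if r \<noteq> [] \<and> a = x \<and> hd r = y then 1 else 0) + count2 x y r"
  by (cases r) auto

lemma count3_Cons:
  "count3 x y z (a # r) =
     (if 2 \<le> length r \<and> a = x \<and> r ! 0 = y \<and> r ! 1 = z then 1 else 0) + count3 x y z r"
  by (cases r; cases "tl r") auto

lemma count2_append:
  "count2 x y (xs @ ys) =
     count2 x y xs + count2 x y ys + count2 x y (drop (length xs - 1) xs @ take 1 ys)"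
proof (induction xs)
  case Nil
  then show ?case by (cases ys) (auto simp: count2_Cons)
next
  case (Cons a xs)
  then show ?case by (cases xs; cases ys) (auto simp: count2_Cons)
qed

lemma count3_append:
  "count3 x y z (xs @ ys) =
     count3 x y z xs + count3 x y z ys + count3 x y z (drop (length xs - 2) xs @ take 2 ys)"
proof (induction xs)
  case Nil
  then show ?case by (cases ys rule: unit_steps.cases) (auto simp: count3_Cons)
next
  case (Cons a xs)
  then show ?case
    by (cases xs rule: unit_steps.cases; cases ys rule: unit_steps.cases)
      (auto simp: count3_Cons nth_append)
qed

lemma count_absent: "(\<forall>t\<in>set s. t \<noteq> x) \<Longrightarrow> count2 x y s = 0 \<and> count3 x y z s = 0"
  by (induction s) (auto simp: count2_Cons count3_Cons)

lemma count2_card: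
  "card {j. Suc j < length xs \<and> xs ! j = x \<and> xs ! Suc j = y} = count2 x y xs"
proof (induction xs)
  case (Cons a r)
  let ?S = "{j. Suc j < length r \<and> r ! j = x \<and> r ! Suc j = y}"
  let ?A = "{j::nat. j = 0 \<and> r \<noteq> [] \<and> a = x \<and> hd r = y}"
  have split: "{j. Suc j < length (a # r) \<and> (a # r) ! j = x \<and> (a # r) ! Suc j = y} = ?A \<union> Suc ` ?S"
  proof (rule set_eqI)
    fix j show "j \<in> {j. Suc j < length (a # r) \<and> (a # r) ! j = x \<and> (a # r) ! Suc j = y}
        \<longleftrightarrow> j \<in> ?A \<union> Suc ` ?S"
      by (cases j) (auto simp: hd_conv_nth)
  qed
  have "finite ?S" by (rule finite_subset[of _ "{..<length r}"]) auto
  then have "card (?A \<union> Suc ` ?S) = card ?A + card ?S"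
    by (subst card_Un_disjoint) (auto simp: card_image)
  moreover have "card ?A = (if r \<noteq> [] \<and> a = x \<and> hd r = y then 1 else 0)" by auto
  ultimately show ?case unfolding split count2_Cons Cons.IH by simp
qed simp

lemma count3_card:
  "card {j. Suc (Suc j) < length xs \<and> xs ! j = x \<and> xs ! Suc j = y \<and> xs ! Suc (Suc j) = z}
     = count3 x y z xs"
proof (induction xs)
  case (Cons a r)
  let ?S = "{j. Suc (Suc j) < length r \<and> r ! j = x \<and> r ! Suc j = y \<and> r ! Suc (Suc j) = z}"
  let ?A = "{j::nat. j = 0 \<and> 2 \<le> length r \<and> a = x \<and> r ! 0 = y \<and> r ! 1 = z}"
  have split: "{j. Suc (Suc j) < length (a # r) \<and> (a # r) ! j = x \<and> (a # r) ! Suc j = y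
      \<and> (a # r) ! Suc (Suc j) = z} = ?A \<union> Suc ` ?S"
  proof (rule set_eqI)
    fix j show "j \<in> {j. Suc (Suc j) < length (a # r) \<and> (a # r) ! j = x \<and> (a # r) ! Suc j = y
        \<and> (a # r) ! Suc (Suc j) = z} \<longleftrightarrow> j \<in> ?A \<union> Suc ` ?S"
      by (cases j) auto
  qed
  have "finite ?S" by (rule finite_subset[of _ "{..<length r}"]) auto
  then have "card (?A \<union> Suc ` ?S) = card ?A + card ?S"
    by (subst card_Un_disjoint) (auto simp: card_image)
  moreover have "card ?A = (if 2 \<le> length r \<and> a = x \<and> r ! 0 = y \<and> r ! 1 = z then 1 else 0)"
    by auto
  ultimately show ?case unfolding split count3_Cons Cons.IH by simp
qed simp

section \<open>Blocks are counted by up-crossings\<close>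

definition up_crossings :: "int list \<Rightarrow> nat \<Rightarrow> nat set" where
  "up_crossings p n = {j. Suc j < length p \<and> p ! j = int n - 1 \<and> p ! Suc j = int n}"

definition branch_crossings :: "int list \<Rightarrow> nat \<Rightarrow> nat set" where
  "branch_crossings p n = {j. Suc (Suc j) < length p \<and> p ! j = int n - 1 \<and> p ! Suc j = int n
     \<and> p ! Suc (Suc j) = int n + 1}"

lemma card_up_crossings: "card (up_crossings p n) = count2 (int n - 1) (int n) p"
  unfolding up_crossings_def by (rule count2_card)

lemma card_branch_crossings: "card (branch_crossings p n) = count3 (int n - 1) (int n) (int n + 1) p"
  unfolding branch_crossings_def by (rule count3_card)

lemma finite_up_crossings: "finite (up_crossings p n)"
  by (rule finite_subset[of _ "{..<length p}"]) (auto simp: up_crossings_def)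

lemma branch_crossings_subset: "branch_crossings p n \<subseteq> up_crossings p n"
  by (auto simp: up_crossings_def branch_crossings_def)

lemma finite_branch_crossings: "finite (branch_crossings p n)"
  using finite_subset[OF branch_crossings_subset finite_up_crossings] .

lemma maximal_run_end:
  fixes p :: "int list"
  assumes "a < length p" "v \<le> p ! a"
  shows "\<exists>b. a \<le> b \<and> b < length p \<and> (\<forall>i. a \<le> i \<and> i \<le> b \<longrightarrow> v \<le> p ! i)
           \<and> (b = length p - 1 \<or> p ! Suc b < v)"
  using assms
proof (induction "length p - 1 - a" arbitrary: a)
  case 0
  then show ?case by (intro exI[of _ a]) auto
next
  case (Suc d)
  show ?case
  proof (cases "p ! Suc a < v")
    case True
    then show ?thesis using Suc.prems by (intro exI[of _ a]) auto
  next
    case False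
    have "d = length p - 1 - Suc a" "Suc a < length p" "v \<le> p ! Suc a"
      using Suc.hyps(2) False by auto
    from Suc.hyps(1)[OF this] obtain b where b: "Suc a \<le> b" "b < length p"
      "\<forall>i. Suc a \<le> i \<and> i \<le> b \<longrightarrow> v \<le> p ! i" "b = length p - 1 \<or> p ! Suc b < v"
      by blast
    have "\<forall>i. a \<le> i \<and> i \<le> b \<longrightarrow> v \<le> p ! i"
      using b(3) Suc.prems by (metis le_antisym not_less_eq_eq)
    then show ?thesis using b by (intro exI[of _ b]) auto
  qed
qed

lemma blocks_same_start:
  assumes "(a, b) \<in> blocks p n" "(a, b') \<in> blocks p n"
  shows "b = b'"
proof -
  have False if "(a, b) \<in> blocks p n" "(a, b') \<in> blocks p n" "b < b'" for b b'
  proof -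
    have "p ! Suc b < int n" using that by (auto simp: blocks_def)
    moreover have "int n \<le> p ! Suc b" using that by (auto simp: blocks_def)
    ultimately show False by simp
  qed
  then show ?thesis using assms by (metis linorder_neqE_nat)
qed

lemma block_start:
  assumes blk: "(a, b) \<in> blocks p n" and start: "p ! 0 < int n" and steps: "unit_steps p"
  shows "1 \<le> a" "a - 1 \<in> up_crossings p n" "a < b \<longleftrightarrow> a - 1 \<in> branch_crossings p n"
proof -
  from blk have ab: "a \<le> b" "b < length p" "\<forall>j. a \<le> j \<and> j \<le> b \<longrightarrow> int n \<le> p ! j"
    "a = 0 \<or> p ! (a - 1) < int n" "b = length p - 1 \<or> p ! (Suc b) < int n"
    by (auto simp: blocks_def)
  have a1: "1 \<le> a" using ab(1,3) start by (cases a) auto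
  then show "1 \<le> a" .
  have st: "\<forall>j. Suc j < length p \<longrightarrow> \<bar>p ! Suc j - p ! j\<bar> = 1"
    using steps unit_steps_iff by blast
  have "\<bar>p ! a - p ! (a - 1)\<bar> = 1" using st[rule_format, of "a - 1"] a1 ab(1,2) by simp
  moreover have "int n \<le> p ! a" using ab(1,3) by blast
  moreover have "p ! (a - 1) < int n" using ab(4) a1 by simp
  ultimately have cross: "p ! (a - 1) = int n - 1" "p ! a = int n" by linarith+
  have "a < length p" using ab(1,2) by simp
  then show "a - 1 \<in> up_crossings p n" using a1 cross by (simp add: up_crossings_def)
  show "a < b \<longleftrightarrow> a - 1 \<in> branch_crossings p n"
  proof
    assume "a < b"
    then have "\<bar>p ! Suc a - p ! a\<bar> = 1" "int n \<le> p ! Suc a"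
      using st[rule_format, of a] ab(2,3) by auto
    then have "p ! Suc a = int n + 1" using cross(2) by linarith
    then show "a - 1 \<in> branch_crossings p n"
      using cross a1 \<open>a < b\<close> ab(2) by (simp add: branch_crossings_def)
  next
    assume "a - 1 \<in> branch_crossings p n"
    then have "Suc a < length p" "p ! Suc a = int n + 1"
      using a1 by (auto simp: branch_crossings_def)
    then have "a \<noteq> b" using ab(5) by auto
    then show "a < b" using ab(1) by simp
  qed
qed

lemma up_crossing_starts_block:
  assumes "j \<in> up_crossings p n"
  shows "\<exists>b. (Suc j, b) \<in> blocks p n"
proof -
  have j: "Suc j < length p" "p ! j = int n - 1" "p ! Suc j = int n"
    using assms by (auto simp: up_crossings_def)
  then obtain b where "Suc j \<le> b" "b < length p" "\<forall>i. Suc j \<le> i \<and> i \<le> b \<longrightarrow> int n \<le> p ! i"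
    "b = length p - 1 \<or> p ! Suc b < int n"
    using maximal_run_end[of "Suc j" p "int n"] by auto
  then show ?thesis using j by (auto simp: blocks_def)
qed

text \<open>Hence the map \<open>(a, b) \<mapsto> a - 1\<close> identifies blocks with up-crossings and
  blocks of length at least two with branch crossings.\<close>

lemma card_blocks:
  assumes "p ! 0 < int n" "unit_steps p"
  shows "card (blocks p n) = card (up_crossings p n)"
    and "card {(a, b) \<in> blocks p n. a < b} = card (branch_crossings p n)"
proof -
  let ?f = "\<lambda>(a::nat, b::nat). a - 1"
  have inj: "inj_on ?f (blocks p n)"
  proof (rule inj_onI, clarify)
    fix a b a' b' assume ab: "(a, b) \<in> blocks p n" "(a', b') \<in> blocks p n" "a - 1 = a' - 1"
    moreover have "1 \<le> a" "1 \<le> a'" using block_start(1)[OF _ assms] ab(1,2) by blast+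
    ultimately have "a = a'" by simp
    then show "a = a' \<and> b = b'" using blocks_same_start ab by blast
  qed
  have "?f ` blocks p n = up_crossings p n"
  proof (rule set_eqI iffI)+
    fix j assume "j \<in> ?f ` blocks p n"
    then obtain a b where "(a, b) \<in> blocks p n" "j = a - 1" by auto
    then show "j \<in> up_crossings p n" using block_start(2)[OF _ assms] by blast
  next
    fix j assume "j \<in> up_crossings p n"
    then obtain b where "(Suc j, b) \<in> blocks p n" using up_crossing_starts_block by blast
    then show "j \<in> ?f ` blocks p n" by (rule rev_image_eqI) simp
  qed
  then show "card (blocks p n) = card (up_crossings p n)"
    using card_image[OF inj] by simp
  have branch_image: "?f ` {(a, b) \<in> blocks p n. a < b} = branch_crossings p n"
  proof (rule set_eqI iffI)+
    fix j assume "j \<in> ?f ` {(a, b) \<in> blocks p n. a < b}"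
    then obtain a b where "(a, b) \<in> blocks p n" "a < b" "j = a - 1" by auto
    then show "j \<in> branch_crossings p n" using block_start(3)[OF _ assms] by blast
  next
    fix j assume j: "j \<in> branch_crossings p n"
    then obtain b where blk: "(Suc j, b) \<in> blocks p n"
      using up_crossing_starts_block branch_crossings_subset by blast
    then have "Suc j < b" using block_start(3)[OF blk assms] j by simp
    then show "j \<in> ?f ` {(a, b) \<in> blocks p n. a < b}"
      using blk by (intro rev_image_eqI[of "(Suc j, b)"]) simp_all
  qed
  have "inj_on ?f {(a, b) \<in> blocks p n. a < b}" by (rule inj_on_subset[OF inj]) auto
  then show "card {(a, b) \<in> blocks p n. a < b} = card (branch_crossings p n)"
    unfolding branch_image[symmetric] by (rule card_image[symmetric])
qed

lemma kappa_nth_up_crossings: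
  "p ! 0 < 0 \<Longrightarrow> unit_steps p \<Longrightarrow> n \<le> M \<Longrightarrow> kappa M p ! n = int (card (up_crossings p n))"
  using card_blocks(1)[of p n] by (simp add: kappa_def del: upt_Suc)

lemma beta_nth_branch_crossings:
  "p ! 0 < 0 \<Longrightarrow> unit_steps p \<Longrightarrow> n \<le> M \<Longrightarrow> beta M p ! n = int (card (branch_crossings p n))"
  using card_blocks(2)[of p n] by (simp add: beta_def del: upt_Suc)

lemma length_kappa: "length (kappa M p) = Suc M" by (simp add: kappa_def)
lemma length_beta: "length (beta M p) = Suc M" by (simp add: beta_def)

definition admissible_branches :: "nat \<Rightarrow> int list \<Rightarrow> int list set" where
  "admissible_branches M k = {b. length b = Suc M \<and> (\<forall>n \<le> M.
     min 1 (ktilde k ! n) \<le> b ! n \<and> b ! n \<le> min (k ! n) (ktilde k ! n))}"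

lemma ktilde_nth:
  "length k = Suc M \<Longrightarrow> n \<le> M \<Longrightarrow> ktilde k ! n = (if n < M then k ! Suc n else 0)"
  by (auto simp: ktilde_def nth_append nth_tl)

section \<open>Necessity: counts of a scattering sequence\<close>

locale scattering_seq =
  fixes M :: nat and p :: "int list"
  assumes mem: "p \<in> scattering_seqs M"
begin

lemma length_ge_3: "3 \<le> length p" using mem by (simp add: scattering_seqs_def)
lemma first_entry: "p ! 0 = -1" using mem by (simp add: scattering_seqs_def)
lemma steps: "unit_steps p" using mem unfolding unit_steps_iff scattering_seqs_def by auto

lemma interior_range:
  assumes "j < length p" "j \<noteq> 0" "j \<noteq> length p - 1"
  shows "0 \<le> p ! j \<and> p ! j \<le> int M"
proof -
  have "1 \<le> j" "j \<le> length p - 2" using assms by arith+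
  then show ?thesis using mem by (simp add: scattering_seqs_def)
qed

lemma entry_le_top: "j < length p \<Longrightarrow> p ! j \<le> int M"
  using interior_range[of j] first_entry mem by (cases "j = 0"; cases "j = length p - 1")
    (auto simp: scattering_seqs_def)

lemma kappa_nth: "n \<le> M \<Longrightarrow> kappa M p ! n = int (card (up_crossings p n))"
  using kappa_nth_up_crossings first_entry steps by simp

lemma beta_nth: "n \<le> M \<Longrightarrow> beta M p ! n = int (card (branch_crossings p n))"
  using beta_nth_branch_crossings first_entry steps by simp

text \<open>The walk leaves \<open>-1\<close> at once, and every later visit to \<open>-1\<close> is the final one,
  so the only up-crossing to level 0 is the first step.\<close>

lemma up_crossings_0: "up_crossings p 0 = {0}"
proof -
  have "\<bar>p ! 1 - p ! 0\<bar> = 1" using steps unit_steps_iff[of p] length_ge_3 by simp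
  moreover have "0 \<le> p ! 1" using interior_range[of 1] length_ge_3 by simp
  ultimately have "p ! 1 = 0" using first_entry by simp
  moreover have "j = 0" if "j \<in> up_crossings p 0" for j
  proof (rule ccontr)
    assume "j \<noteq> 0"
    moreover have j: "Suc j < length p" "p ! j = -1" using that by (auto simp: up_crossings_def)
    moreover have "j \<noteq> length p - 1" using j(1) by simp
    ultimately show False using interior_range[of j] by simp
  qed
  ultimately show ?thesis using length_ge_3 first_entry by (auto simp: up_crossings_def)
qed

lemma up_crossings_prev:
  assumes "1 \<le> n" "up_crossings p n \<noteq> {}"
  shows "up_crossings p (n - 1) \<noteq> {}"
proof -
  obtain j where j: "Suc j < length p" "p ! Suc j = int n" using assms by (auto simp: up_crossings_def)
  obtain j' where "Suc j' \<le> Suc j" "p ! j' = int (n - 1) - 1" "p ! Suc j' = int (n - 1)"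
    using first_up_crossing[OF steps j(1), of "int (n - 1)"] first_entry j assms(1) by auto
  then have "j' \<in> up_crossings p (n - 1)" using j by (auto simp: up_crossings_def)
  then show ?thesis by blast
qed

text \<open>The first up-crossing to \<open>n + 1\<close> comes right after an up-crossing to \<open>n\<close>.\<close>

lemma branch_crossings_nonempty:
  assumes "up_crossings p (Suc n) \<noteq> {}"
  shows "branch_crossings p n \<noteq> {}"
proof -
  obtain j where j: "Suc j < length p" "p ! Suc j = int n + 1"
    using assms by (auto simp: up_crossings_def)
  obtain j' where j': "Suc j' \<le> Suc j" "p ! j' = int n" "p ! Suc j' = int n + 1"
    "\<forall>t\<le>j'. p ! t < int n + 1"
    using first_up_crossing[OF steps j(1), of "int n + 1"] first_entry j by auto
  have "j' \<noteq> 0" using j'(2) first_entry by (cases j') auto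
  moreover have "Suc (j' - 1) < length p" using j' j by simp
  ultimately have "\<bar>p ! Suc (j' - 1) - p ! (j' - 1)\<bar> = 1"
    using steps unit_steps_iff by blast
  moreover have "p ! (j' - 1) < int n + 1" using j' by simp
  ultimately have "p ! (j' - 1) = int n - 1"
    using j' \<open>j' \<noteq> 0\<close> by (simp add: abs_if split: if_splits)
  then have "j' - 1 \<in> branch_crossings p n"
    using j' j \<open>j' \<noteq> 0\<close> by (auto simp: branch_crossings_def)
  then show ?thesis by blast
qed

text \<open>Each branch crossing at \<open>n\<close> continues with an up-crossing to \<open>n + 1\<close>.\<close>

lemma card_branch_le_next: "card (branch_crossings p n) \<le> card (up_crossings p (Suc n))"
proof -
  have "Suc ` branch_crossings p n \<subseteq> up_crossings p (Suc n)"
    by (auto simp: up_crossings_def branch_crossings_def)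
  then have "card (Suc ` branch_crossings p n) \<le> card (up_crossings p (Suc n))"
    by (rule card_mono[OF finite_up_crossings])
  then show ?thesis by (simp add: card_image)
qed

lemma branch_crossings_top: "branch_crossings p M = {}"
proof -
  have False if "j \<in> branch_crossings p M" for j
    using that entry_le_top[of "Suc (Suc j)"] by (auto simp: branch_crossings_def)
  then show ?thesis by blast
qed

theorem kappa_in_frakL: "kappa M p \<in> frakL M"
proof -
  have "kappa M p ! 0 = 1" using kappa_nth[of 0] up_crossings_0 by simp
  moreover have "kappa M p ! (n - 1) > 0" if "1 \<le> n" "n \<le> M" "kappa M p ! n > 0" for n
  proof -
    have "up_crossings p n \<noteq> {}" using that kappa_nth[of n] by (auto simp: card_gt_0_iff)
    then have "up_crossings p (n - 1) \<noteq> {}" using up_crossings_prev that by blast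
    then show ?thesis using kappa_nth[of "n - 1"] that finite_up_crossings
      by (simp add: card_gt_0_iff)
  qed
  ultimately show ?thesis using kappa_nth by (auto simp: frakL_def length_kappa)
qed

theorem beta_admissible: "beta M p \<in> admissible_branches M (kappa M p)"
proof -
  have "min 1 (ktilde (kappa M p) ! n) \<le> beta M p ! n
      \<and> beta M p ! n \<le> min (kappa M p ! n) (ktilde (kappa M p) ! n)" if n: "n \<le> M" for n
  proof (cases "n < M")
    case True
    let ?up = "card (up_crossings p n)" and ?br = "card (branch_crossings p n)"
      and ?next = "card (up_crossings p (Suc n))"
    have next_level: "ktilde (kappa M p) ! n = int ?next"
      using ktilde_nth[OF length_kappa n] True kappa_nth[of "Suc n"] by simp
    have "?br \<le> ?up" by (rule card_mono[OF finite_up_crossings branch_crossings_subset])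
    moreover have "?br \<le> ?next" by (rule card_branch_le_next)
    moreover have "min 1 (int ?next) \<le> int ?br"
    proof (cases "up_crossings p (Suc n) = {}")
      case False
      then have "branch_crossings p n \<noteq> {}" by (rule branch_crossings_nonempty)
      then have "0 < ?br" using finite_branch_crossings card_gt_0_iff by blast
      then show ?thesis by simp
    qed simp
    ultimately show ?thesis unfolding next_level beta_nth[OF n] kappa_nth[OF n] by simp
  next
    case False
    then have "ktilde (kappa M p) ! n = 0" "beta M p ! n = 0" "0 \<le> kappa M p ! n"
      using ktilde_nth[OF length_kappa n] beta_nth[OF n] kappa_nth[OF n] branch_crossings_top n
      by auto
    then show ?thesis by simp
  qed
  then show ?thesis by (simp add: admissible_branches_def length_beta)
qed

end

section \<open>Sufficiency: building walks from excursions\<close>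

definition excursion :: "int \<Rightarrow> int list \<Rightarrow> bool" where
  "excursion v s \<longleftrightarrow> s \<noteq> [] \<and> hd s = v \<and> last s = v \<and> (\<forall>x\<in>set s. v \<le> x) \<and> unit_steps s"

fun join_at :: "int \<Rightarrow> int list list \<Rightarrow> int list" where
  "join_at v [] = [v - 1]"
| "join_at v (s # B) = (v - 1) # s @ join_at v B"

definition up_total :: "int \<Rightarrow> int list list \<Rightarrow> nat" where
  "up_total m B = sum_list (map (count2 (m - 1) m) B)"

definition branch_total :: "int \<Rightarrow> int list list \<Rightarrow> nat" where
  "branch_total m B = sum_list (map (count3 (m - 1) m (m + 1)) B)"

definition long_count :: "int list list \<Rightarrow> nat" where
  "long_count B = length (filter (\<lambda>s. 2 \<le> length s) B)"

lemma totals_append: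
  "up_total m (xs @ ys) = up_total m xs + up_total m ys"
  "branch_total m (xs @ ys) = branch_total m xs + branch_total m ys"
  "long_count (xs @ ys) = long_count xs + long_count ys"
  by (simp_all add: up_total_def branch_total_def long_count_def)

lemma join_at_ends: "join_at v B \<noteq> [] \<and> hd (join_at v B) = v - 1 \<and> last (join_at v B) = v - 1"
  by (induction B) auto

lemma set_join_at: "set (join_at v B) = insert (v - 1) (\<Union> (set ` set B))"
  by (induction B) auto

lemma join_at_long: "(2 \<le> length (join_at v B)) = (B \<noteq> [])"
  by (induction B) auto

lemma join_at_excursion: "\<forall>s\<in>set B. excursion v s \<Longrightarrow> excursion (v - 1) (join_at v B)"
proof (induction B)
  case Nil
  then show ?case by (simp add: excursion_def)
next
  case (Cons s B)
  then have s: "excursion v s" and IH: "excursion (v - 1) (join_at v B)" by auto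
  have "unit_steps (s @ join_at v B)"
    using s IH join_at_ends[of v B] by (simp add: unit_steps_append excursion_def)
  moreover have "hd (s @ join_at v B) = v" using s by (simp add: excursion_def)
  ultimately have "unit_steps ((v - 1) # s @ join_at v B)"
    using s by (simp add: unit_steps_Cons excursion_def)
  moreover have "\<forall>x\<in>set (join_at v (s # B)). v - 1 \<le> x" using s IH by (force simp: excursion_def)
  ultimately show ?case using join_at_ends[of v "s # B"] by (simp add: excursion_def)
qed

lemma excursion_second: "excursion v s \<Longrightarrow> 2 \<le> length s \<Longrightarrow> s ! 1 = v + 1"
proof -
  assume s: "excursion v s" and l: "2 \<le> length s"
  have "\<bar>s ! 1 - s ! 0\<bar> = 1" using s l unit_steps_iff[of s] by (auto simp: excursion_def)
  moreover have "s ! 0 = v" using s by (metis hd_conv_nth excursion_def)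
  moreover have "v \<le> s ! 1" using s l by (auto simp: excursion_def)
  ultimately show ?thesis by linarith
qed

text \<open>Joining adds one up-crossing to \<open>v\<close> per excursion; no up-crossing straddles a
  junction, because the walk steps down from the end of an excursion.\<close>

lemma count2_join_at:
  "\<forall>s\<in>set B. excursion v s \<Longrightarrow>
     count2 (m - 1) m (join_at v B) = (if m = v then length B else 0) + up_total m B"
proof (induction B)
  case Nil
  then show ?case by (simp add: up_total_def)
next
  case (Cons s B)
  then have s: "excursion v s" and IH: "count2 (m - 1) m (join_at v B)
      = (if m = v then length B else 0) + up_total m B" by auto
  have ne: "s \<noteq> []" "hd s = v" "last s = v" using s by (auto simp: excursion_def)
  have "drop (length s - 1) s = [v]" using ne by (cases s rule: rev_cases) auto
  moreover have "take 1 (join_at v B) = [v - 1]"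
    using join_at_ends[of v B] by (cases "join_at v B") auto
  ultimately have junction: "count2 (m - 1) m (drop (length s - 1) s @ take 1 (join_at v B)) = 0"
    by simp
  have "count2 (m - 1) m (join_at v (s # B))
      = (if m = v then 1 else 0) + count2 (m - 1) m (s @ join_at v B)"
    using ne by (simp add: count2_Cons)
  also have "\<dots> = (if m = v then 1 else 0) + count2 (m - 1) m s + count2 (m - 1) m (join_at v B)"
    by (subst count2_append) (use junction in linarith)
  finally show ?case using IH by (simp add: up_total_def)
qed

lemma count3_descent:
  assumes "D \<noteq> []" "last D = v" "T \<noteq> []" "hd T = v - 1" "length D \<le> 2" "length T \<le> 2"
  shows "count3 (m - 1) m (m + 1) (D @ T) = 0"
proof -
  have "D @ T = butlast D @ [v, v - 1] @ tl T"
    using assms(1-4) by (cases T) (auto simp: append_butlast_last_id[symmetric])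
  moreover have "length (butlast D) \<le> 1" "length (tl T) \<le> 1" using assms by auto
  ultimately show ?thesis
    by (cases "butlast D"; cases "tl T") (auto simp: count3_Cons)
qed

lemma count3_join_at:
  "\<forall>s\<in>set B. excursion v s \<Longrightarrow>
     count3 (m - 1) m (m + 1) (join_at v B) = (if m = v then long_count B else 0) + branch_total m B"
proof (induction B)
  case Nil
  then show ?case by (simp add: branch_total_def long_count_def)
next
  case (Cons s B)
  then have s: "excursion v s" and IH: "count3 (m - 1) m (m + 1) (join_at v B)
      = (if m = v then long_count B else 0) + branch_total m B" by auto
  have ne: "s \<noteq> []" "hd s = v" "last s = v" using s by (auto simp: excursion_def)
  have junction: "count3 (m - 1) m (m + 1) (drop (length s - 2) s @ take 2 (join_at v B)) = 0"
  proof (rule count3_descent)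
    show "drop (length s - 2) s \<noteq> []" using ne by (cases s) auto
    show "last (drop (length s - 2) s) = v" using ne by (simp add: last_drop)
  qed (use join_at_ends[of v B] in auto)
  have first_window: "(if 2 \<le> length (s @ join_at v B) \<and> v - 1 = m - 1 \<and> (s @ join_at v B) ! 0 = m
        \<and> (s @ join_at v B) ! 1 = m + 1 then 1 else 0) = (if m = v \<and> 2 \<le> length s then 1 else (0::nat))"
  proof (cases "2 \<le> length s")
    case True
    then show ?thesis using excursion_second[OF s True] ne by (auto simp: nth_append hd_conv_nth)
  next
    case False
    then have "length s = 1" using ne(1) length_greater_0_conv[of s] by linarith
    then have "(s @ join_at v B) ! 1 = v - 1"
      using join_at_ends[of v B] by (auto simp: nth_append hd_conv_nth)
    then show ?thesis using False by auto
  qed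
  have "count3 (m - 1) m (m + 1) (join_at v (s # B))
      = (if m = v \<and> 2 \<le> length s then 1 else 0) + count3 (m - 1) m (m + 1) (s @ join_at v B)"
    using first_window by (simp only: join_at.simps count3_Cons)
  also have "\<dots> = (if m = v \<and> 2 \<le> length s then 1 else 0) + count3 (m - 1) m (m + 1) s
      + count3 (m - 1) m (m + 1) (join_at v B)"
    by (subst count3_append) (use junction in linarith)
  finally show ?case using IH by (simp add: branch_total_def long_count_def)
qed

lemma totals_below:
  "\<forall>s\<in>set C. excursion v s \<Longrightarrow> m \<le> v \<Longrightarrow> up_total m C = 0 \<and> branch_total m C = 0"
proof (induction C)
  case (Cons s C)
  then have "\<forall>x\<in>set s. x \<noteq> m - 1" by (auto simp: excursion_def)
  then show ?case using Cons count_absent by (simp add: up_total_def branch_total_def)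
qed (simp add: up_total_def branch_total_def)

lemma join_groups:
  assumes "\<forall>s\<in>set (concat G). excursion (v + 1) s"
  defines "B \<equiv> map (join_at (v + 1)) G"
  shows "\<forall>s\<in>set B. excursion v s"
    and "long_count B = length (filter (\<lambda>g. g \<noteq> []) G)"
    and "up_total m B = (if m = v + 1 then length (concat G) else 0) + up_total m (concat G)"
    and "branch_total m B = (if m = v + 1 then long_count (concat G) else 0) + branch_total m (concat G)"
proof -
  show "\<forall>s\<in>set B. excursion v s"
    using assms join_at_excursion[of _ "v + 1"] by (auto simp: B_def)
  have "long_count B = length (filter ((\<lambda>s. 2 \<le> length s) \<circ> join_at (v + 1)) G)"
    by (simp add: B_def long_count_def filter_map)
  also have "(\<lambda>s. 2 \<le> length s) \<circ> join_at (v + 1) = (\<lambda>g. g \<noteq> [])"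
    using join_at_long by (auto simp: o_def)
  finally show "long_count B = length (filter (\<lambda>g. g \<noteq> []) G)" .
  show "up_total m B = (if m = v + 1 then length (concat G) else 0) + up_total m (concat G)"
    using assms(1) unfolding B_def
  proof (induction G)
    case (Cons g G)
    then show ?case using count2_join_at[of g "v + 1" m] by (simp add: up_total_def)
  qed (simp add: up_total_def)
  show "branch_total m B = (if m = v + 1 then long_count (concat G) else 0) + branch_total m (concat G)"
    using assms(1) unfolding B_def
  proof (induction G)
    case (Cons g G)
    then show ?case using count3_join_at[of g "v + 1" m] totals_append
      by (simp add: branch_total_def)
  qed (simp add: branch_total_def long_count_def)
qed

lemma split_into_groups:
  assumes "b \<le> k" "b \<le> length C" "C \<noteq> [] \<Longrightarrow> b \<noteq> 0"
  shows "\<exists>G. concat G = C \<and> length G = k \<and> length (filter (\<lambda>g. g \<noteq> []) G) = b"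
proof (cases "b = 0")
  case True
  then show ?thesis using assms by (intro exI[of _ "replicate k []"]) auto
next
  case False
  let ?t = "length C - b + 1"
  let ?G = "take ?t C # map (\<lambda>s. [s]) (drop ?t C) @ replicate (k - b) []"
  have "concat ?G = C" by (simp add: concat_map_singleton)
  moreover have "length ?G = k" using assms False by simp
  moreover have "take ?t C \<noteq> []" using assms False by auto
  then have "length (filter (\<lambda>g. g \<noteq> []) ?G) = b" using assms False
    by (simp add: filter_map o_def)
  ultimately show ?thesis by blast
qed

lemma join_at_scattering:
  assumes r: "excursion 0 r" and bounded: "\<forall>x\<in>set r. x \<le> int M"
  shows "join_at 0 [r] \<in> scattering_seqs M"
proof -
  let ?p = "join_at 0 [r]"
  have p: "?p = (-1) # r @ [-1]" by simp
  have "r \<noteq> []" using r by (simp add: excursion_def)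
  then have "3 \<le> length ?p" by (cases r) auto
  moreover have "0 \<le> ?p ! j \<and> ?p ! j \<le> int M" if "1 \<le> j" "j \<le> length ?p - 2" for j
  proof -
    have "j - 1 < length r" using that by auto
    moreover have "?p ! j = r ! (j - 1)" using that calculation by (cases j) (auto simp: nth_append)
    ultimately show ?thesis using r bounded by (auto simp: excursion_def)
  qed
  moreover have "unit_steps ?p" using join_at_excursion[of "[r]" 0] r by (simp add: excursion_def)
  ultimately show ?thesis unfolding scattering_seqs_def unit_steps_iff by (simp add: nth_append)
qed

locale branch_data =
  fixes M :: nat and k b :: "int list"
  assumes k: "k \<in> frakL M" and b: "b \<in> admissible_branches M k"
begin

definition k_at :: "nat \<Rightarrow> nat" where "k_at m = (if m \<le> M then nat (k ! m) else 0)"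
definition b_at :: "nat \<Rightarrow> nat" where "b_at m = (if m \<le> M then nat (b ! m) else 0)"

lemma k_at: "n \<le> M \<Longrightarrow> int (k_at n) = k ! n"
  using k by (simp add: k_at_def frakL_def)

lemma k_at_0: "k_at 0 = 1"
  using k by (simp add: frakL_def k_at_def)

lemma b_at:
  assumes n: "n \<le> M"
  shows "int (b_at n) = b ! n" "b_at n \<le> k_at n" "b_at n \<le> k_at (Suc n)"
    "k_at (Suc n) \<noteq> 0 \<Longrightarrow> b_at n \<noteq> 0"
proof -
  have "ktilde k ! n = int (k_at (Suc n))"
    using ktilde_nth[of k M n] k n by (auto simp: frakL_def k_at_def)
  then have box: "min 1 (int (k_at (Suc n))) \<le> b ! n" "b ! n \<le> min (int (k_at n)) (int (k_at (Suc n)))"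
    using b n k_at[OF n] by (auto simp: admissible_branches_def)
  then show "int (b_at n) = b ! n" using n by (simp add: b_at_def)
  show "b_at n \<le> k_at n" "b_at n \<le> k_at (Suc n)" "k_at (Suc n) \<noteq> 0 \<Longrightarrow> b_at n \<noteq> 0"
    using box n by (auto simp: b_at_def)
qed

definition level_family :: "nat \<Rightarrow> int list list \<Rightarrow> bool" where
  "level_family n B \<longleftrightarrow> (\<forall>s\<in>set B. excursion (int n) s \<and> (\<forall>x\<in>set s. x \<le> int M))
     \<and> length B = k_at n \<and> long_count B = b_at n
     \<and> (\<forall>m>n. up_total (int m) B = k_at m \<and> branch_total (int m) B = b_at m)"

text \<open>Descending one level: group the family at level \<open>n + 1\<close> into \<open>k\<^sub>n\<close> groups, \<open>b\<^sub>n\<close> of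
  them nonempty, and join each group at level \<open>n\<close>.\<close>

lemma level_step:
  assumes n: "n \<le> M" and C: "level_family (Suc n) C"
  shows "\<exists>B. level_family n B"
proof -
  have Cv: "\<forall>s\<in>set C. excursion (int n + 1) s" and Cbound: "\<forall>s\<in>set C. \<forall>x\<in>set s. x \<le> int M"
    and Cl: "length C = k_at (Suc n)" and Cb: "long_count C = b_at (Suc n)"
    and Cc: "\<forall>m>Suc n. up_total (int m) C = k_at m \<and> branch_total (int m) C = b_at m"
    using C by (auto simp: level_family_def add.commute)
  have "b_at n \<le> length C" using b_at(3)[OF n] Cl by simp
  moreover have "C \<noteq> [] \<Longrightarrow> b_at n \<noteq> 0" using b_at(4)[OF n] Cl by (metis length_0_conv)
  ultimately obtain G where
    G: "concat G = C" "length G = k_at n" "length (filter (\<lambda>g. g \<noteq> []) G) = b_at n"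
    using split_into_groups[OF b_at(2)[OF n]] by blast
  define B where "B = map (join_at (int n + 1)) G"
  note joined = join_groups[of G "int n", folded B_def, unfolded G(1)]
  have "\<forall>s\<in>set B. \<forall>x\<in>set s. x \<le> int M"
    using set_join_at[of "int n + 1"] Cbound G(1) n by (auto simp: B_def)
  moreover have "up_total (int m) B = k_at m \<and> branch_total (int m) B = b_at m" if "m > n" for m
  proof (cases "m = Suc n")
    case True
    then have "up_total (int m) C = 0 \<and> branch_total (int m) C = 0"
      using totals_below[OF Cv] by simp
    then show ?thesis using joined(3,4)[OF Cv] True Cl Cb by simp
  next
    case False
    then show ?thesis using joined(3,4)[OF Cv] Cc that by simp
  qed
  ultimately have "level_family n B"
    using joined(1,2)[OF Cv] G by (simp add: level_family_def B_def)
  then show ?thesis ..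
qed

lemma level_family_exists: "n \<le> Suc M \<Longrightarrow> \<exists>B. level_family n B"
proof (induction "Suc M - n" arbitrary: n)
  case 0
  then have "n = Suc M" by simp
  then have "level_family n []"
    by (simp add: level_family_def k_at_def b_at_def up_total_def branch_total_def long_count_def)
  then show ?case ..
next
  case (Suc d)
  then have "d = Suc M - Suc n" "Suc n \<le> Suc M" "n \<le> M" by auto
  then show ?case using Suc.hyps(1) level_step by blast
qed

theorem realise: "\<exists>p\<in>scattering_seqs M. kappa M p = k \<and> beta M p = b"
proof -
  obtain B where B: "level_family 0 B" using level_family_exists by blast
  then obtain r where r: "B = [r]" using k_at_0
    by (auto simp: level_family_def length_Suc_conv)
  have rv: "excursion 0 r" "\<forall>x\<in>set r. x \<le> int M" and rc: "long_count [r] = b_at 0"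
    and higher: "\<forall>m>0. up_total (int m) [r] = k_at m \<and> branch_total (int m) [r] = b_at m"
    using B by (auto simp: level_family_def r)
  define p where "p = join_at 0 [r]"
  have pS: "p \<in> scattering_seqs M" unfolding p_def by (rule join_at_scattering[OF rv])
  have start: "p ! 0 < 0" and steps: "unit_steps p"
    using join_at_excursion[of "[r]" 0] rv(1) by (auto simp: p_def excursion_def)
  have level0: "up_total 0 [r] = 0 \<and> branch_total 0 [r] = 0" using totals_below[of "[r]" 0 0] rv by simp
  have "kappa M p ! n = k ! n" if n: "n \<le> M" for n
  proof -
    have "kappa M p ! n = int ((if int n = 0 then 1 else 0) + up_total (int n) [r])"
      using kappa_nth_up_crossings[OF start steps n] card_up_crossings count2_join_at[of "[r]" 0] rv
      by (simp add: p_def)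
    then show ?thesis using level0 higher k_at[OF n] k_at_0 k_at[of 0] by (cases "n = 0") auto
  qed
  moreover have "beta M p ! n = b ! n" if n: "n \<le> M" for n
  proof -
    have "beta M p ! n = int ((if int n = 0 then long_count [r] else 0) + branch_total (int n) [r])"
      using beta_nth_branch_crossings[OF start steps n] card_branch_crossings count3_join_at[of "[r]" 0] rv
      by (simp add: p_def)
    then show ?thesis using level0 higher rc b_at(1)[OF n] by (cases "n = 0") auto
  qed
  moreover have "length b = Suc M" "length k = Suc M"
    using b k by (simp_all add: admissible_branches_def frakL_def)
  ultimately have "kappa M p = k \<and> beta M p = b"
    by (auto intro!: nth_equalityI simp: length_kappa length_beta)
  then show ?thesis using pS by blast
qed

end

text \<open>The admissible box is never empty: its lower corner \<open>min(1, k\<^sub>n\<^sub>+\<^sub>1)\<close> lies below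
  \<open>k\<^sub>n\<close>, since \<open>k\<^sub>n\<^sub>+\<^sub>1 > 0\<close> forces \<open>k\<^sub>n > 0\<close>.\<close>

lemma lower_corner_admissible:
  assumes k: "k \<in> frakL M"
  shows "map (\<lambda>n. min 1 (ktilde k ! n)) [0..<Suc M] \<in> admissible_branches M k"
proof -
  have kl: "length k = Suc M" using k by (simp add: frakL_def)
  have "min 1 (ktilde k ! n) \<le> k ! n" if n: "n \<le> M" for n
  proof (cases "n < M")
    case True
    have "0 < k ! Suc n \<Longrightarrow> 0 < k ! n"
      using k True by (auto simp: frakL_def dest: spec[of _ "Suc n"])
    moreover have "0 \<le> k ! n" using k n by (simp add: frakL_def)
    ultimately show ?thesis using ktilde_nth[OF kl n] True by (cases "0 < k ! Suc n") auto
  next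
    case False
    moreover have "0 \<le> k ! n" using k n by (simp add: frakL_def)
    ultimately show ?thesis using ktilde_nth[OF kl n] by simp
  qed
  then show ?thesis by (simp add: admissible_branches_def del: upt_Suc)
qed

theorem proposition6p1:
  fixes M :: nat
  assumes "M \<ge> 1"
  shows "kappa M ` scattering_seqs M = frakL M
    \<and> (\<forall>k \<in> frakL M.
         {beta M p | p. p \<in> scattering_seqs M \<and> kappa M p = k}
         = {b. length b = Suc M \<and> (\<forall>n \<le> M.
               min 1 (ktilde k ! n) \<le> b ! n \<and> b ! n \<le> min (k ! n) (ktilde k ! n))})"
proof -
  have realisable: "\<exists>p\<in>scattering_seqs M. kappa M p = k \<and> beta M p = b"
    if "k \<in> frakL M" "b \<in> admissible_branches M k" for k b
    using branch_data.realise[OF branch_data.intro[OF that]] .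
  have "kappa M ` scattering_seqs M = frakL M"
    using scattering_seq.kappa_in_frakL[OF scattering_seq.intro]
      realisable[OF _ lower_corner_admissible] by fast
  moreover have "{beta M p | p. p \<in> scattering_seqs M \<and> kappa M p = k} = admissible_branches M k"
    if "k \<in> frakL M" for k
    using scattering_seq.beta_admissible[OF scattering_seq.intro] realisable[OF that] by fast
  ultimately show ?thesis unfolding admissible_branches_def by blast
qed

end
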